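(* Let $k\ge 2$ be an integer, let $\chi$ be a set, and let $d_H:\chi^k\to[0,\infty)$ be an $H$-metric with parameter $\gamma$. Define $d:\chi^2\to[0,\infty)$ by $$d(p_1,p_2):=d_H(p_1,\underbrace{p_2,\ldots,p_2}_{k-1})+d_H(p_2,\underbrace{p_1,\ldots,p_1}_{k-1}).$$ Then $d$ is a metric on $\chi$ (symmetric, $d(p,q)\ge 0$ with equality iff $p=q$, and satisfying the triangle inequality), and for all $p_1,\ldots,p_k\in\chi$ and every $v\in\{p_1,\ldots,p_k\}$, $$\frac{1}{\gamma k^2}\sum_{i=1}^{k-1}\sum_{j=i+1}^{k} d(p_i,p_j)\;\le\; d_H(p_1,\ldots,p_k)\;\le\;\sum_{i=1}^k d(v,p_i).$$
   Context: For a multiset $S$ of elements of $\chi$, $elem(S)$ denotes the set of distinct elements of $S$. An $H$-metric with parameter $\gamma$ (where $\gamma$ is an integer with $1\le\gamma\le k-1$) is a function $d_H:\chi^k\to[0,\infty)$ satisfying: ($\Pi$) $d_H(p_1,\ldots,p_k)$ is invariant under permuting its arguments; ($O_D$) $d_H(p_1,\ldots,p_k)\ge 0$, with equality if and only if $p_1=\cdots=p_k$; ($\Delta_H$) for all $p_1,\ldots,p_k,a\in\chi$ and all $i\in\{1,\ldots,k\}$, $d_H(p_1,\ldots,p_k)\le d_H(p_1,\ldots,p_i,a,\ldots,a)+d_H(a,\ldots,a,p_{i+1},\ldots,p_k)$, where $a$ appears $k-i$ times in the first term and $i$ times in the second; ($\mathcal S_H$) for all $p_1,\ldots,p_k,p'_1,\ldots,p'_k\in\chi$: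 if $elem(\{p_1,\ldots,p_k\})\subsetneq elem(\{p'_1,\ldots,p'_k\})$ then $d_H(p_1,\ldots,p_k)\le d_H(p'_1,\ldots,p'_k)$, and if $elem(\{p_1,\ldots,p_k\})= elem(\{p'_1,\ldots,p'_k\})$ then $d_H(p_1,\ldots,p_k)\le \gamma\, d_H(p'_1,\ldots,p'_k)$. *)

theory Defs
  imports "HOL-Analysis.Analysis"
begin

text \<open>Points of \<chi>^k are represented as lists of length k over the type 'a
  (position i of the list is the (i+1)-st argument). elem(S) is set.\<close>

definition H_metric :: "nat \<Rightarrow> nat \<Rightarrow> ('a list \<Rightarrow> real) \<Rightarrow> bool" where
  "H_metric k \<gamma> dH \<longleftrightarrow>
     1 \<le> \<gamma> \<and> \<gamma> \<le> k - 1 \<and>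
     (\<forall>ps qs. length ps = k \<longrightarrow> mset qs = mset ps \<longrightarrow> dH qs = dH ps) \<and>
     (\<forall>ps. length ps = k \<longrightarrow> dH ps \<ge> 0 \<and>
            (dH ps = 0 \<longleftrightarrow> (\<forall>x\<in>set ps. \<forall>y\<in>set ps. x = y))) \<and>
     (\<forall>ps a i. length ps = k \<longrightarrow> 1 \<le> i \<longrightarrow> i \<le> k \<longrightarrow>
            dH ps \<le> dH (take i ps @ replicate (k - i) a) + dH (replicate i a @ drop i ps)) \<and>
     (\<forall>ps qs. length ps = k \<longrightarrow> length qs = k \<longrightarrow>
            (set ps \<subset> set qs \<longrightarrow> dH ps \<le> dH qs) \<and>
            (set ps = set qs \<longrightarrow> dH ps \<le> real \<gamma> * dH qs))"

definition induced_dist :: "nat \<Rightarrow> ('a list \<Rightarrow> real) \<Rightarrow> 'a \<Rightarrow> 'a \<Rightarrow> real" where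
  "induced_dist k dH p q = dH (p # replicate (k - 1) q) + dH (q # replicate (k - 1) p)"

end

theory Submission
  imports Defs
begin

text \<open>The upper bound pads ps with copies of v and peels off one entry at a time with
  the H-triangle inequality at i = 1 (v need not be an entry of ps); what is peeled off is dH (x, v, \<dots>, v) \<le> d(v, x).
  For the lower bound, any pair x, y of entries of ps gives a tuple (x, y, \<dots>, y) whose
  elements are among those of ps, so by monotonicity d(x, y) \<le> 2\<gamma> dH ps; there are
  fewer than k^2/2 pairs.\<close>

lemma H_metricD:
  assumes "H_metric k \<gamma> dH"
  shows H_metric_gamma_ge_1: "1 \<le> \<gamma>"
    and "\<forall>ps qs. length ps = k \<longrightarrow> mset qs = mset ps \<longrightarrow> dH qs = dH ps"
    and "\<forall>ps. length ps = k \<longrightarrow> 0 \<le> dH ps \<and>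
            (dH ps = 0 \<longleftrightarrow> (\<forall>x\<in>set ps. \<forall>y\<in>set ps. x = y))"
    and "\<forall>ps a i. length ps = k \<longrightarrow> 1 \<le> i \<longrightarrow> i \<le> k \<longrightarrow>
            dH ps \<le> dH (take i ps @ replicate (k - i) a) + dH (replicate i a @ drop i ps)"
    and "\<forall>ps qs. length ps = k \<longrightarrow> length qs = k \<longrightarrow>
            (set ps \<subset> set qs \<longrightarrow> dH ps \<le> dH qs) \<and>
            (set ps = set qs \<longrightarrow> dH ps \<le> real \<gamma> * dH qs)"
  using assms unfolding H_metric_def by - (elim conjE, assumption)+

lemma H_metric_permute:
  "H_metric k \<gamma> dH \<Longrightarrow> length ps = k \<Longrightarrow> mset qs = mset ps \<Longrightarrow> dH qs = dH ps"
  using H_metricD(2) by blast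

lemma H_metric_nonneg: "H_metric k \<gamma> dH \<Longrightarrow> length ps = k \<Longrightarrow> 0 \<le> dH ps"
  using H_metricD(3) by blast

lemma H_metric_eq_0_iff:
  "H_metric k \<gamma> dH \<Longrightarrow> length ps = k \<Longrightarrow> dH ps = 0 \<longleftrightarrow> (\<forall>x\<in>set ps. \<forall>y\<in>set ps. x = y)"
  using H_metricD(3) by blast

lemma H_metric_triangle:
  "H_metric k \<gamma> dH \<Longrightarrow> length ps = k \<Longrightarrow> 1 \<le> i \<Longrightarrow> i \<le> k \<Longrightarrow>
   dH ps \<le> dH (take i ps @ replicate (k - i) a) + dH (replicate i a @ drop i ps)"
  using H_metricD(4) by blast

lemma H_metric_mono_psubset:
  "H_metric k \<gamma> dH \<Longrightarrow> length ps = k \<Longrightarrow> length qs = k \<Longrightarrow> set ps \<subset> set qs \<Longrightarrow> dH ps \<le> dH qs"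
  using H_metricD(5) by blast

lemma H_metric_same_set_le:
  "H_metric k \<gamma> dH \<Longrightarrow> length ps = k \<Longrightarrow> length qs = k \<Longrightarrow> set ps = set qs \<Longrightarrow>
   dH ps \<le> real \<gamma> * dH qs"
  using H_metricD(5) by blast

lemma H_metric_subset_le:
  assumes H: "H_metric k \<gamma> dH" and "length ps = k" "length qs = k" "set ps \<subseteq> set qs"
  shows "dH ps \<le> real \<gamma> * dH qs"
proof (cases "set ps = set qs")
  case True
  then show ?thesis using H_metric_same_set_le[OF H assms(2,3)] by simp
next
  case False
  then have "dH ps \<le> dH qs"
    using H_metric_mono_psubset[OF H assms(2,3)] assms(4) by blast
  also have "\<dots> \<le> real \<gamma> * dH qs"
    using H_metric_gamma_ge_1[OF H] H_metric_nonneg[OF H assms(3)]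
    by (simp add: mult_le_cancel_right1)
  finally show ?thesis .
qed

lemma H_metric_cons_replicate_triangle:
  assumes H: "H_metric k \<gamma> dH" and "2 \<le> k"
  shows "dH (p # replicate (k - 1) r) \<le> dH (p # replicate (k - 1) q) + dH (q # replicate (k - 1) r)"
  using H_metric_triangle[OF H, of "p # replicate (k - 1) r" 1 q] assms(2) by simp

lemma H_metric_cons_replicate_eq_0_iff:
  assumes H: "H_metric k \<gamma> dH" and "2 \<le> k"
  shows "dH (p # replicate (k - 1) q) = 0 \<longleftrightarrow> p = q"
  using H_metric_eq_0_iff[OF H, of "p # replicate (k - 1) q"] assms(2) by auto

lemma induced_dist_commute: "induced_dist k dH p q = induced_dist k dH q p"
  unfolding induced_dist_def by simp

lemma induced_dist_nonneg:
  assumes "H_metric k \<gamma> dH" and "1 \<le> k"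
  shows "0 \<le> induced_dist k dH p q"
  unfolding induced_dist_def
  using H_metric_nonneg[OF assms(1), of "p # replicate (k - 1) q"]
        H_metric_nonneg[OF assms(1), of "q # replicate (k - 1) p"] assms(2)
  by simp

lemma induced_dist_eq_0_iff:
  assumes "H_metric k \<gamma> dH" and "2 \<le> k"
  shows "induced_dist k dH p q = 0 \<longleftrightarrow> p = q"
  unfolding induced_dist_def
  using H_metric_nonneg[OF assms(1), of "p # replicate (k - 1) q"]
        H_metric_nonneg[OF assms(1), of "q # replicate (k - 1) p"]
        H_metric_cons_replicate_eq_0_iff[OF assms, of p q] assms(2)
  by auto

lemma induced_dist_triangle:
  assumes "H_metric k \<gamma> dH" and "2 \<le> k"
  shows "induced_dist k dH p r \<le> induced_dist k dH p q + induced_dist k dH q r"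
  unfolding induced_dist_def
  using H_metric_cons_replicate_triangle[OF assms, of p r q]
        H_metric_cons_replicate_triangle[OF assms, of r p q]
  by simp

lemma H_metric_padded_le_sum:
  assumes H: "H_metric k \<gamma> dH" and "1 \<le> k"
  shows "length xs \<le> k \<Longrightarrow>
    dH (xs @ replicate (k - length xs) v) \<le> (\<Sum>x\<leftarrow>xs. dH (x # replicate (k - 1) v))"
proof (induction xs)
  case Nil
  show ?case using H_metric_eq_0_iff[OF H, of "replicate k v"] by simp
next
  case (Cons x xs)
  let ?ps = "x # xs @ replicate (k - Suc (length xs)) v"
  have len: "length ?ps = k" using Cons.prems by simp
  have "dH ?ps \<le> dH (take 1 ?ps @ replicate (k - 1) v) + dH (replicate 1 v @ drop 1 ?ps)"
    by (rule H_metric_triangle[OF H len]) (use assms(2) in simp_all)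
  moreover have "dH (replicate 1 v @ drop 1 ?ps) = dH (xs @ replicate (k - length xs) v)"
  proof (rule H_metric_permute[OF H])
    show "length (xs @ replicate (k - length xs) v) = k" using Cons.prems by simp
    have "k - length xs = Suc (k - Suc (length xs))" using Cons.prems by simp
    then show "mset (replicate 1 v @ drop 1 ?ps) = mset (xs @ replicate (k - length xs) v)"
      by simp
  qed
  ultimately show ?case using Cons by simp
qed

lemma H_metric_le_sum_induced_dist:
  assumes H: "H_metric k \<gamma> dH" and "1 \<le> k" and len: "length ps = k"
  shows "dH ps \<le> (\<Sum>i<k. induced_dist k dH v (ps ! i))"
proof -
  have "dH ps = dH (ps @ replicate (k - length ps) v)" using len by simp
  also have "\<dots> \<le> (\<Sum>x\<leftarrow>ps. dH (x # replicate (k - 1) v))"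
    using H_metric_padded_le_sum[OF H assms(2), of ps v] len by simp
  also have "\<dots> \<le> (\<Sum>x\<leftarrow>ps. induced_dist k dH v x)"
    unfolding induced_dist_def
    using H_metric_nonneg[OF H, of "v # replicate (k - 1) _"] assms(2)
    by (intro sum_list_mono) simp
  also have "\<dots> = (\<Sum>i<k. induced_dist k dH v (ps ! i))"
    using sum_list_sum_nth[of "map (induced_dist k dH v) ps"] len
    by (simp add: atLeast0LessThan)
  finally show ?thesis .
qed

lemma induced_dist_le_H_metric:
  assumes H: "H_metric k \<gamma> dH" and "2 \<le> k" "length ps = k" "x \<in> set ps" "y \<in> set ps"
  shows "induced_dist k dH x y \<le> 2 * real \<gamma> * dH ps"
proof -
  have "dH (p # replicate (k - 1) q) \<le> real \<gamma> * dH ps"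
    if "p \<in> set ps" "q \<in> set ps" for p q
    using H_metric_subset_le[OF H, of "p # replicate (k - 1) q" ps] assms(2,3) that
    by (cases "k - 1") auto
  from this[OF assms(4,5)] this[OF assms(5,4)] show ?thesis
    unfolding induced_dist_def by simp
qed

lemma sum_upper_triangle_le:
  fixes f :: "nat \<Rightarrow> nat \<Rightarrow> real"
  assumes "0 \<le> c" and "\<And>i j. i < j \<Longrightarrow> j < k \<Longrightarrow> f i j \<le> c"
  shows "2 * (\<Sum>i<k. \<Sum>j\<in>{i+1..<k}. f i j) \<le> c * real k ^ 2"
proof -
  have "(\<Sum>i<k. \<Sum>j\<in>{i+1..<k}. f i j) \<le> (\<Sum>i<k. \<Sum>j\<in>{i+1..<k}. c)"
    using assms(2) by (intro sum_mono) auto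
  also have "\<dots> = c * (\<Sum>i<k. real (k - Suc i))"
    by (simp add: sum_distrib_left mult.commute)
  also have "\<dots> = c * (\<Sum>i<k. real i)"
    using sum.nat_diff_reindex[of "\<lambda>i. real i" k] by simp
  finally have "2 * (\<Sum>i<k. \<Sum>j\<in>{i+1..<k}. f i j) \<le> c * (2 * (\<Sum>i<k. real i))"
    by simp
  also have "\<dots> \<le> c * real k ^ 2"
  proof (intro mult_left_mono assms(1))
    show "2 * (\<Sum>i<k. real i) \<le> real k ^ 2"
      by (induction k) (auto simp: power2_eq_square algebra_simps)
  qed
  finally show ?thesis .
qed

lemma H_metric_ge_pairwise_sum:
  assumes H: "H_metric k \<gamma> dH" and "2 \<le> k" and len: "length ps = k"
  shows "(1 / (real \<gamma> * real k ^ 2)) * (\<Sum>i<k. \<Sum>j\<in>{i+1..<k}. induced_dist k dH (ps ! i) (ps ! j))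
    \<le> dH ps"
proof -
  have "2 * (\<Sum>i<k. \<Sum>j\<in>{i+1..<k}. induced_dist k dH (ps ! i) (ps ! j))
      \<le> 2 * real \<gamma> * dH ps * real k ^ 2"
    using H_metric_nonneg[OF H len] len
    by (intro sum_upper_triangle_le induced_dist_le_H_metric[OF H assms(2) len]) auto
  moreover have "0 < real \<gamma> * real k ^ 2"
    using H_metric_gamma_ge_1[OF H] assms(2) by simp
  ultimately show ?thesis by (simp add: field_simps)
qed

theorem theorem1:
  fixes k \<gamma> :: nat and dH :: "'a list \<Rightarrow> real"
  assumes "k \<ge> 2" and "H_metric k \<gamma> dH"
  defines "d \<equiv> induced_dist k dH"
  shows "(\<forall>p q. d p q = d q p) \<and>
         (\<forall>p q. d p q \<ge> 0 \<and> (d p q = 0 \<longleftrightarrow> p = q)) \<and>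
         (\<forall>p q r. d p r \<le> d p q + d q r) \<and>
         (\<forall>ps v. length ps = k \<longrightarrow> v \<in> set ps \<longrightarrow>
            (1 / (real \<gamma> * real k ^ 2)) * (\<Sum>i<k. \<Sum>j\<in>{i+1..<k}. d (ps ! i) (ps ! j)) \<le> dH ps \<and>
            dH ps \<le> (\<Sum>i<k. d v (ps ! i)))"
  unfolding d_def
proof (intro conjI allI impI)
  fix p q r
  show "induced_dist k dH p q = induced_dist k dH q p"
    by (rule induced_dist_commute)
  show "0 \<le> induced_dist k dH p q"
    using induced_dist_nonneg[OF assms(2)] assms(1) by simp
  show "induced_dist k dH p q = 0 \<longleftrightarrow> p = q"
    by (rule induced_dist_eq_0_iff[OF assms(2,1)])
  show "induced_dist k dH p r \<le> induced_dist k dH p q + induced_dist k dH q r"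
    by (rule induced_dist_triangle[OF assms(2,1)])
next
  fix ps :: "'a list" and v
  assume "length ps = k"
  then show "(1 / (real \<gamma> * real k ^ 2)) *
      (\<Sum>i<k. \<Sum>j\<in>{i+1..<k}. induced_dist k dH (ps ! i) (ps ! j)) \<le> dH ps"
    and "dH ps \<le> (\<Sum>i<k. induced_dist k dH v (ps ! i))"
    using H_metric_ge_pairwise_sum[OF assms(2,1)] H_metric_le_sum_induced_dist[OF assms(2)] assms(1)
    by simp_all
qed

end
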